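(* For every integer $n\geq 3$, the $n$-fan $F_n=P_{n+1}\lor K_1$ satisfies $\eta(F_n)=2$.
   Context: All graphs are finite, simple and undirected. $P_{n+1}$ is the path with $n+1$ vertices (length $n$), $K_1$ is the graph with one vertex, and $G_1\lor G_2$ (join) is the graph on $V(G_1)\cup V(G_2)$ with edges $E(G_1)\cup E(G_2)\cup\{(u,v):u\in V(G_1),v\in V(G_2)\}$. For a vertex $v$, $N(v)$ is its set of neighbours. For a positive integer $k$, $[k]=\{1,\dots,k\}$. For a labeling $f:V(G)\to[k]$ and $S\subseteq V(G)$, $f(S)=\sum_{u\in S}f(u)$. A labeling $f:V(G)\to[k]$ is an additive $k$-coloring if $f(N(u))\neq f(N(v))$ for every edge $(u,v)$ of $G$. The additive chromatic number $\eta(G)$ is the least $k$ for which $G$ has an additive $k$-coloring. *)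

theory Defs
  imports Main
begin

text \<open>A finite simple graph is given by a vertex set V and a symmetric,
irreflexive edge relation E (only the edges between vertices of V matter).\<close>

definition nbhd :: "'a set \<Rightarrow> ('a \<Rightarrow> 'a \<Rightarrow> bool) \<Rightarrow> 'a \<Rightarrow> 'a set" where
  "nbhd V E u = {v \<in> V. E u v}"

definition additive_coloring ::
  "'a set \<Rightarrow> ('a \<Rightarrow> 'a \<Rightarrow> bool) \<Rightarrow> nat \<Rightarrow> ('a \<Rightarrow> nat) \<Rightarrow> bool" where
  "additive_coloring V E k f \<longleftrightarrow>
     (\<forall>v\<in>V. f v \<in> {1..k}) \<and>
     (\<forall>u\<in>V. \<forall>v\<in>V. E u v \<longrightarrow> sum f (nbhd V E u) \<noteq> sum f (nbhd V E v))"

definition eta :: "'a set \<Rightarrow> ('a \<Rightarrow> 'a \<Rightarrow> bool) \<Rightarrow> nat" where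
  "eta V E = (LEAST k. k \<ge> 1 \<and> (\<exists>f. additive_coloring V E k f))"

definition path_edge :: "nat \<Rightarrow> nat \<Rightarrow> nat \<Rightarrow> bool" where
  "path_edge n u v \<longleftrightarrow> u \<le> n \<and> v \<le> n \<and> (v = u + 1 \<or> u = v + 1)"

definition join_V :: "'a set \<Rightarrow> 'b set \<Rightarrow> ('a + 'b) set" where
  "join_V V1 V2 = Inl ` V1 \<union> Inr ` V2"

fun join_E :: "('a \<Rightarrow> 'a \<Rightarrow> bool) \<Rightarrow> ('b \<Rightarrow> 'b \<Rightarrow> bool) \<Rightarrow> ('a + 'b) \<Rightarrow> ('a + 'b) \<Rightarrow> bool" where
  "join_E E1 E2 (Inl a) (Inl b) = E1 a b"
| "join_E E1 E2 (Inr a) (Inr b) = E2 a b"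
| "join_E E1 E2 (Inl a) (Inr b) = True"
| "join_E E1 E2 (Inr a) (Inl b) = True"

definition fan_V :: "nat \<Rightarrow> (nat + unit) set" where
  "fan_V n = join_V {0..n} {()}"

definition fan_E :: "nat \<Rightarrow> (nat + unit) \<Rightarrow> (nat + unit) \<Rightarrow> bool" where
  "fan_E n = join_E (path_edge n) (\<lambda>_ _. False)"

end

theory Submission
  imports Defs
begin

text \<open>The lower bound: with a single label every neighbourhood sum is a degree, and the path
  vertices 1 and 2 are adjacent and both have degree 3. The upper bound: label the hub 1 and the
  path alternately 2, 1, 2, 1, \<dots> (with one correction at the end). Then adjacent path
  vertices get different neighbourhood sums, each at most 5, while the hub sees the whole path,
  of weight at least n + 2; the case n = 3 is checked directly.\<close>

lemma additive_coloring_1_sum_eq_card: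
  assumes "additive_coloring V E 1 f" "v \<in> V"
  shows "sum f (nbhd V E v) = card (nbhd V E v)"
proof -
  have "\<forall>u \<in> nbhd V E v. f u = 1"
    using assms(1) by (auto simp: additive_coloring_def nbhd_def)
  then show ?thesis by simp
qed

text \<open>With only one label, neighbourhood sums are degrees, so an edge between two vertices
  of equal degree rules out additive 1-colorings.\<close>

lemma eta_eq_2I:
  assumes "additive_coloring V E 2 f"
    and "u \<in> V" "v \<in> V" "E u v"
    and "card (nbhd V E u) = card (nbhd V E v)"
  shows "eta V E = 2"
  unfolding eta_def
proof (rule Least_equality)
  show "1 \<le> (2::nat) \<and> (\<exists>f. additive_coloring V E 2 f)" using assms(1) by auto
next
  fix k assume k: "1 \<le> k \<and> (\<exists>f. additive_coloring V E k f)"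
  have "\<not> additive_coloring V E 1 g" for g
  proof
    assume g: "additive_coloring V E 1 g"
    then have "sum g (nbhd V E u) = sum g (nbhd V E v)"
      using assms(2,3,5) by (simp add: additive_coloring_1_sum_eq_card)
    with g assms(2-4) show False by (auto simp: additive_coloring_def)
  qed
  with k show "2 \<le> k" by (cases "k = 1") auto
qed

lemma nbhd_join_Inl:
  "nbhd (join_V V1 V2) (join_E E1 E2) (Inl a) = Inl ` nbhd V1 E1 a \<union> Inr ` V2"
  by (auto simp: nbhd_def join_V_def)

lemma nbhd_join_Inr:
  "nbhd (join_V V1 V2) (join_E E1 E2) (Inr b) = Inl ` V1 \<union> Inr ` nbhd V2 E2 b"
  by (auto simp: nbhd_def join_V_def)

lemma sum_Inl_Inr_image:
  assumes "finite A" "finite B"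
  shows "sum f (Inl ` A \<union> Inr ` B) = sum (f \<circ> Inl) A + sum (f \<circ> Inr) B"
proof -
  have "sum f (Inl ` A \<union> Inr ` B) = sum f (Inl ` A) + sum f (Inr ` B)"
    using assms by (intro sum.union_disjoint) auto
  then show ?thesis by (simp add: sum.reindex)
qed

lemma sum_nbhd_join_Inl:
  assumes "finite V1" "finite V2"
  shows "sum f (nbhd (join_V V1 V2) (join_E E1 E2) (Inl a))
           = sum (f \<circ> Inl) (nbhd V1 E1 a) + sum (f \<circ> Inr) V2"
proof -
  have "finite (nbhd V1 E1 a)" using assms(1) by (simp add: nbhd_def)
  then show ?thesis
    using assms(2) by (simp add: nbhd_join_Inl sum_Inl_Inr_image)
qed

lemma sum_nbhd_join_Inr:
  assumes "finite V1" "finite V2"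
  shows "sum f (nbhd (join_V V1 V2) (join_E E1 E2) (Inr b))
           = sum (f \<circ> Inl) V1 + sum (f \<circ> Inr) (nbhd V2 E2 b)"
proof -
  have "finite (nbhd V2 E2 b)" using assms(2) by (simp add: nbhd_def)
  then show ?thesis
    using assms(1) by (simp add: nbhd_join_Inr sum_Inl_Inr_image)
qed

lemma nbhd_path:
  "nbhd {0..n} (path_edge n) i
     = (if 0 < i \<and> i \<le> n then {i - 1} else {}) \<union> (if i < n then {Suc i} else {})"
  by (auto simp: nbhd_def path_edge_def)

lemma sum_nbhd_path:
  assumes "i \<le> n"
  shows "sum f (nbhd {0..n} (path_edge n) i)
           = (if 0 < i then f (i - 1) else 0) + (if i < n then f (Suc i) else 0)"
  using assms by (simp add: nbhd_path add.commute)

lemma sum_nbhd_fan_path: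
  assumes "i \<le> n"
  shows "sum f (nbhd (fan_V n) (fan_E n) (Inl i))
           = (if 0 < i then f (Inl (i - 1)) else 0) + (if i < n then f (Inl (Suc i)) else 0)
             + f (Inr ())"
  using assms by (simp add: fan_V_def fan_E_def sum_nbhd_join_Inl sum_nbhd_path)

lemma sum_nbhd_fan_hub:
  "sum f (nbhd (fan_V n) (fan_E n) (Inr u)) = (\<Sum>i\<le>n. f (Inl i))"
proof -
  have "nbhd {()} (\<lambda>_ _. False) u = {}" by (simp add: nbhd_def)
  then show ?thesis by (simp add: fan_V_def fan_E_def sum_nbhd_join_Inr atLeast0AtMost)
qed

text \<open>Labels 2, 1, 2, 1, \<dots> along the path give interior path vertices the sums 3 (even) and
  5 (odd); for odd n the label of vertex n - 1 is lowered to 1, since otherwise vertex n - 1 and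
  the endpoint n would both have sum 3.\<close>

definition fan_labels :: "nat \<Rightarrow> nat + unit \<Rightarrow> nat" where
  "fan_labels n v = (case v of
      Inl i \<Rightarrow> if odd n \<and> i = n - 1 then 1 else if even i then 2 else 1
    | Inr _ \<Rightarrow> 1)"

definition path_sum :: "nat \<Rightarrow> nat \<Rightarrow> nat" where
  "path_sum n i = sum (fan_labels n) (nbhd (fan_V n) (fan_E n) (Inl i))"

lemma fan_labels_bounds: "1 \<le> fan_labels n v" "fan_labels n v \<le> 2"
  by (auto simp: fan_labels_def split: sum.split)

lemma path_sum_eq:
  assumes "i \<le> n"
  shows "path_sum n i = Suc ((if 0 < i then fan_labels n (Inl (i - 1)) else 0)
                             + (if i < n then fan_labels n (Inl (Suc i)) else 0))"
  using assms by (simp add: path_sum_def sum_nbhd_fan_path fan_labels_def)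

lemma path_sum_le:
  assumes "i \<le> n"
  shows "path_sum n i \<le> 5"
proof -
  have "(if 0 < i then fan_labels n (Inl (i - 1)) else 0) \<le> 2"
       "(if i < n then fan_labels n (Inl (Suc i)) else 0) \<le> 2"
    using fan_labels_bounds(2) by simp_all
  then show ?thesis using assms by (simp add: path_sum_eq)
qed

lemma path_sum_Suc_neq:
  assumes "3 \<le> n" "i < n"
  shows "path_sum n i \<noteq> path_sum n (Suc i)"
proof (cases i)
  case 0
  then show ?thesis using assms by (auto simp: path_sum_eq fan_labels_def)
next
  case (Suc k)
  then show ?thesis using assms
    by (cases "Suc (Suc k) < n")
       (auto simp: path_sum_eq fan_labels_def split: if_splits; presburger)+
qed

lemma hub_sum_ge:
  assumes "3 \<le> n"
  shows "n + 2 \<le> (\<Sum>i\<le>n. fan_labels n (Inl i))"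
proof -
  have "(\<Sum>i\<le>n. fan_labels n (Inl i)) = fan_labels n (Inl 0) + (\<Sum>i\<in>{1..n}. fan_labels n (Inl i))"
    by (simp add: atMost_atLeast0 sum.atLeast_Suc_atMost)
  moreover have "fan_labels n (Inl 0) = 2" using assms by (simp add: fan_labels_def)
  moreover have "n \<le> (\<Sum>i\<in>{1..n}. fan_labels n (Inl i))"
    using sum_mono[of "{1..n}" "\<lambda>_. 1::nat" "\<lambda>i. fan_labels n (Inl i)"] fan_labels_bounds(1)
    by simp
  ultimately show ?thesis by linarith
qed

lemma hub_sum_neq_path_sum:
  assumes "3 \<le> n" "i \<le> n"
  shows "(\<Sum>j\<le>n. fan_labels n (Inl j)) \<noteq> path_sum n i"
proof (cases "n = 3")
  case True
  then show ?thesis using assms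
    by (simp add: path_sum_eq fan_labels_def numeral_eq_Suc le_Suc_eq; elim disjE; simp)
next
  case False
  then show ?thesis using assms hub_sum_ge[OF assms(1)] path_sum_le[OF assms(2)] by linarith
qed

lemma fan_vertex_cases:
  assumes "v \<in> fan_V n"
  obtains (path) i where "v = Inl i" "i \<le> n" | (hub) "v = Inr ()"
  using assms by (auto simp: fan_V_def join_V_def)

lemma additive_coloring_fan_labels:
  assumes "3 \<le> n"
  shows "additive_coloring (fan_V n) (fan_E n) 2 (fan_labels n)"
  unfolding additive_coloring_def
proof (intro conjI ballI impI)
  fix v show "fan_labels n v \<in> {1..2}" using fan_labels_bounds[of n v] by simp
next
  fix u v assume "u \<in> fan_V n" "v \<in> fan_V n" and edge: "fan_E n u v"
  have hub: "sum (fan_labels n) (nbhd (fan_V n) (fan_E n) (Inr ()))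
              \<noteq> sum (fan_labels n) (nbhd (fan_V n) (fan_E n) (Inl i))"
    if "i \<le> n" for i
    using hub_sum_neq_path_sum[OF assms that] by (simp add: sum_nbhd_fan_hub path_sum_def)
  have path: "sum (fan_labels n) (nbhd (fan_V n) (fan_E n) (Inl i))
              \<noteq> sum (fan_labels n) (nbhd (fan_V n) (fan_E n) (Inl j))"
    if "fan_E n (Inl i) (Inl j)" for i j
    using that path_sum_Suc_neq[OF assms, of i] path_sum_Suc_neq[OF assms, of j]
    unfolding path_sum_def by (auto simp: fan_E_def path_edge_def)
  show "sum (fan_labels n) (nbhd (fan_V n) (fan_E n) u)
          \<noteq> sum (fan_labels n) (nbhd (fan_V n) (fan_E n) v)"
    using \<open>u \<in> fan_V n\<close> \<open>v \<in> fan_V n\<close>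
  proof (cases rule: fan_vertex_cases[case_product fan_vertex_cases])
    case (path_path i j) then show ?thesis using path edge by simp
  next
    case (path_hub i) then show ?thesis using hub[of i] by simp
  next
    case (hub_path j) then show ?thesis using hub[of j] by simp
  next
    case hub_hub then show ?thesis using edge by (simp add: fan_E_def)
  qed
qed

theorem mainTheorem6:
  fixes n :: nat
  assumes "n \<ge> 3"
  shows "eta (fan_V n) (fan_E n) = 2"
proof (rule eta_eq_2I)
  show "additive_coloring (fan_V n) (fan_E n) 2 (fan_labels n)"
    using assms by (rule additive_coloring_fan_labels)
  show "Inl 1 \<in> fan_V n" "Inl 2 \<in> fan_V n" using assms by (auto simp: fan_V_def join_V_def)
  show "fan_E n (Inl 1) (Inl 2)" using assms by (simp add: fan_E_def path_edge_def)
  have "card (nbhd (fan_V n) (fan_E n) (Inl i)) = 3" if "0 < i" "i < n" for i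
    using that sum_nbhd_fan_path[of i n "\<lambda>_. 1::nat"] by (simp add: sum_constant)
  then show "card (nbhd (fan_V n) (fan_E n) (Inl 1)) = card (nbhd (fan_V n) (fan_E n) (Inl 2))"
    using assms by simp
qed

end
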